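(* Consider the recursive algorithm $\mathrm{DST}(I,\widetilde{\mathrm{opt}})$ described in the context, applied to a planar \textsc{Directed Steiner Tree} instance $I=(G=(V,E),c,r,X)$ with positive integer edge costs and an estimate $\widetilde{\mathrm{opt}}$. Let $\ell$ and $o$ be non-negative integers with $|X|\le 2^{\ell}$ and $\widetilde{\mathrm{opt}}\le 2^{o}$. If $\widetilde{\mathrm{opt}}\ge \mathrm{opt}$, where $\mathrm{opt}$ is the optimal value of $I$, then $\mathrm{DST}(I,\widetilde{\mathrm{opt}})$ returns a feasible solution of cost at most $(6\ell+1)\cdot\mathrm{opt}$. Furthermore, the total number of recursive calls made by $\mathrm{DST}(I,\widetilde{\mathrm{opt}})$ and its subsequent recursive calls is at most $|X|\cdot 2^{2\ell+o}$.
   Context: \textsc{Directed Steiner Tree}: digraph $G=(V,E)$ (parallel edges allowed, planar underlying undirected graph) with edge costs $c_e$ (here positive integers), root $r$, terminals $X\subseteq V\setminus\{r\}$; a feasible solution is $F\subseteq E$ containing a directed $r$–$t$ path for each $t\in X$, of cost $\sum_{e\in F}c_e$; $\mathrm{opt}$ is the minimum cost. $d(u,v)$ is the shortest-path distance. Induced subinstances: for a partial arborescence $T$ rooted at $r$ (a directed tree containing $r$ oriented away from $r$) with $C_1,\dots,C_h$ the weakly connected components of $G\setminus T$ (delete vertices of $T$ and incident edges), contract $T$ into $r$ to get $G_{\mathrm{contract}}$, and set $I_{C_i}=(G_{\mathrm{contract}}[C_i\cup\{r\}],c,r,C_i\cap X)$, edges inheriting costs from the edges of $G$ they come from. Algorithm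 $\mathrm{DST}(I,\widetilde{\mathrm{opt}})$: (1) If $\widetilde{\mathrm{opt}}<1$ or $d(r,t)>\widetilde{\mathrm{opt}}$ for some $t\in X$, return infeasible. (2) Else if $|X|=1$, return a shortest directed path from $r$ to the terminal. (3) Otherwise: let $\mathcal F_1=\mathrm{DST}(I,\widetilde{\mathrm{opt}}/2)$ (cost $\infty$ if infeasible). Remove all vertices $v$ with $d(r,v)>\widetilde{\mathrm{opt}}$. Giving each terminal weight $1$ and every other vertex weight $0$, compute (by the planar shortest-path separator) a partial arborescence $T$ that is the union of up to three shortest directed paths starting at $r$ such that each weakly connected component $C_1,\dots,C_h$ of $G\setminus T$ contains at most $|X|/2$ terminals. Let $\mathcal F'_i=\mathrm{DST}(I_{C_i},\widetilde{\mathrm{opt}})$ for each $i$, and $\mathcal F_2$ be the edges of $G$ corresponding to $E(T)\cup\bigcup_i\mathcal F'_i$ (cost $\infty$ if some $\mathcal F'_i$ is infeasible). If both costs are $\infty$ return infeasible; else return the cheaper of $\mathcal F_1,\mathcal F_2$. *)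

theory Defs
  imports "HOL-Analysis.Analysis" "HOL-Library.Extended_Real"
begin

text \<open>A digraph with parallel edges: edges are identifiers of type 'e with
  source and target maps. An instance also carries edge costs, a root and terminals.\<close>

record ('v, 'e) dst_inst =
  vs    :: "'v set"
  es    :: "'e set"
  src   :: "'e \<Rightarrow> 'v"
  tgt   :: "'e \<Rightarrow> 'v"
  cost  :: "'e \<Rightarrow> nat"
  root  :: "'v"
  terms :: "'v set"

definition wf_inst :: "('v, 'e) dst_inst \<Rightarrow> bool" where
  "wf_inst I \<longleftrightarrow> finite (vs I) \<and> finite (es I)
     \<and> (\<forall>e\<in>es I. src I e \<in> vs I \<and> tgt I e \<in> vs I)
     \<and> root I \<in> vs I \<and> terms I \<subseteq> vs I - {root I}
     \<and> (\<forall>e\<in>es I. cost I e > 0)"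

text \<open>Planarity of the underlying undirected multigraph (loops ignored):
  vertices are embedded injectively in the plane, every non-loop edge is an arc
  joining the images of its endpoints and containing no other vertex image, and
  two distinct non-loop edges meet only in images of common endpoints.\<close>

definition planar_inst :: "('v, 'e) dst_inst \<Rightarrow> bool" where
  "planar_inst I \<longleftrightarrow> (\<exists>(pos :: 'v \<Rightarrow> complex) (\<gamma> :: 'e \<Rightarrow> real \<Rightarrow> complex).
     inj_on pos (vs I)
     \<and> (\<forall>e\<in>es I. src I e \<noteq> tgt I e \<longrightarrow>
          arc (\<gamma> e) \<and> pathstart (\<gamma> e) = pos (src I e) \<and> pathfinish (\<gamma> e) = pos (tgt I e)
          \<and> path_image (\<gamma> e) \<inter> pos ` vs I = {pos (src I e), pos (tgt I e)})
     \<and> (\<forall>e\<in>es I. \<forall>e'\<in>es I. e \<noteq> e' \<and> src I e \<noteq> tgt I e \<and> src I e' \<noteq> tgt I e' \<longrightarrow>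
          path_image (\<gamma> e) \<inter> path_image (\<gamma> e') \<subseteq>
            pos ` ({src I e, tgt I e} \<inter> {src I e', tgt I e'})))"

definition walk :: "('v, 'e) dst_inst \<Rightarrow> 'v \<Rightarrow> 'e list \<Rightarrow> 'v \<Rightarrow> bool" where
  "walk I u p v \<longleftrightarrow> set p \<subseteq> es I \<and> u \<in> vs I \<and> v \<in> vs I
     \<and> (p = [] \<longrightarrow> u = v)
     \<and> (p \<noteq> [] \<longrightarrow> src I (hd p) = u \<and> tgt I (last p) = v
          \<and> (\<forall>i. Suc i < length p \<longrightarrow> tgt I (p ! i) = src I (p ! Suc i)))"

definition walk_cost :: "('v, 'e) dst_inst \<Rightarrow> 'e list \<Rightarrow> nat" where
  "walk_cost I p = sum_list (map (cost I) p)"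

text \<open>Shortest-path distance d(u,v) (infinite if v is unreachable).\<close>
definition dist :: "('v, 'e) dst_inst \<Rightarrow> 'v \<Rightarrow> 'v \<Rightarrow> ereal" where
  "dist I u v = (INF p \<in> {p. walk I u p v}. ereal (real (walk_cost I p)))"

definition shortest_walk :: "('v, 'e) dst_inst \<Rightarrow> 'v \<Rightarrow> 'e list \<Rightarrow> 'v \<Rightarrow> bool" where
  "shortest_walk I u p v \<longleftrightarrow> walk I u p v \<and> (\<forall>q. walk I u q v \<longrightarrow> walk_cost I p \<le> walk_cost I q)"

definition feasible :: "('v, 'e) dst_inst \<Rightarrow> 'e set \<Rightarrow> bool" where
  "feasible I F \<longleftrightarrow> F \<subseteq> es I \<and> (\<forall>t\<in>terms I. \<exists>p. walk I (root I) p t \<and> set p \<subseteq> F)"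

definition sol_cost :: "('v, 'e) dst_inst \<Rightarrow> 'e set \<Rightarrow> nat" where
  "sol_cost I F = sum (cost I) F"

definition opt :: "('v, 'e) dst_inst \<Rightarrow> ereal" where
  "opt I = (INF F \<in> {F. feasible I F}. ereal (real (sol_cost I F)))"

definition reduce :: "('v, 'e) dst_inst \<Rightarrow> real \<Rightarrow> ('v, 'e) dst_inst" where
  "reduce I optt = (let V' = {v \<in> vs I. dist I (root I) v \<le> ereal optt} in
     I\<lparr> vs := V', es := {e \<in> es I. src I e \<in> V' \<and> tgt I e \<in> V'} \<rparr>)"

definition tree_verts :: "('v, 'e) dst_inst \<Rightarrow> 'e set \<Rightarrow> 'v set" where
  "tree_verts I TE = {root I} \<union> src I ` TE \<union> tgt I ` TE"

definition wcomps :: "('v, 'e) dst_inst \<Rightarrow> 'v set \<Rightarrow> 'v set set" where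
  "wcomps I W = (let V' = vs I - W;
                     E' = {e \<in> es I. src I e \<in> V' \<and> tgt I e \<in> V'};
                     R = {(src I e, tgt I e) | e. e \<in> E'}
                 in V' // (((R \<union> R\<inverse>)\<^sup>*) \<inter> (V' \<times> V')))"

definition valid_separator :: "('v, 'e) dst_inst \<Rightarrow> 'e set \<Rightarrow> bool" where
  "valid_separator I TE \<longleftrightarrow>
     (\<exists>ps. length ps \<le> 3 \<and> (\<forall>p\<in>set ps. \<exists>v. shortest_walk I (root I) p v)
          \<and> TE = \<Union> (set ` set ps))
     \<and> (\<forall>v\<in>tree_verts I TE. card {e \<in> TE. tgt I e = v} = (if v = root I then 0 else 1))
     \<and> (\<forall>C\<in>wcomps I (tree_verts I TE). 2 * card (C \<inter> terms I) \<le> card (terms I))"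

text \<open>Induced subinstance I_C: contract T into r and take the subgraph induced by
  C \<union> {r}; edges keep their identities (so they correspond to the edges of G).\<close>
definition sub_inst :: "('v, 'e) dst_inst \<Rightarrow> 'e set \<Rightarrow> 'v set \<Rightarrow> ('v, 'e) dst_inst" where
  "sub_inst I TE C = (let W = tree_verts I TE;
       s' = (\<lambda>e. if src I e \<in> W then root I else src I e);
       t' = (\<lambda>e. if tgt I e \<in> W then root I else tgt I e)
     in \<lparr> vs = C \<union> {root I},
          es = {e \<in> es I - TE. s' e \<in> C \<union> {root I} \<and> t' e \<in> C \<union> {root I}},
          src = s', tgt = t', cost = cost I, root = root I, terms = C \<inter> terms I \<rparr>)"

text \<open>Return the cheaper of the two candidates (None = infeasible, cost infinity).\<close>
definition cheaper :: "('e \<Rightarrow> nat) \<Rightarrow> 'e set option \<Rightarrow> 'e set option \<Rightarrow> 'e set option \<Rightarrow> bool" where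
  "cheaper c F1 F2 R \<longleftrightarrow>
     (F1 = None \<and> F2 = None \<and> R = None)
     \<or> (\<exists>A. R = Some A \<and> (R = F1 \<or> R = F2)
          \<and> (\<forall>B. F1 = Some B \<or> F2 = Some B \<longrightarrow> sum c A \<le> sum c B))"

text \<open>dst_run I optt R k: some execution of DST(I, optt) returns R
  (None = infeasible) and makes k calls in total (this call and all calls
  below it). Nondeterminism: choice of shortest path, of the separator, and of
  ties between F1 and F2. Components without terminals need no recursive call.\<close>

inductive dst_run :: "('v, 'e) dst_inst \<Rightarrow> real \<Rightarrow> 'e set option \<Rightarrow> nat \<Rightarrow> bool" where
  fail: "optt < 1 \<or> (\<exists>t\<in>terms I. ereal optt < dist I (root I) t)
         \<Longrightarrow> dst_run I optt None 1"
| single: "\<not> (optt < 1 \<or> (\<exists>t\<in>terms I. ereal optt < dist I (root I) t))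
         \<Longrightarrow> terms I = {t} \<Longrightarrow> shortest_walk I (root I) p t
         \<Longrightarrow> dst_run I optt (Some (set p)) 1"
| recur: "\<not> (optt < 1 \<or> (\<exists>t\<in>terms I. ereal optt < dist I (root I) t))
         \<Longrightarrow> card (terms I) \<noteq> 1
         \<Longrightarrow> dst_run I (optt / 2) F1 k1
         \<Longrightarrow> I' = reduce I optt
         \<Longrightarrow> valid_separator I' TE
         \<Longrightarrow> Cs = {C \<in> wcomps I' (tree_verts I' TE). C \<inter> terms I' \<noteq> {}}
         \<Longrightarrow> (\<forall>C\<in>Cs. dst_run (sub_inst I' TE C) optt (Fs C) (ks C))
         \<Longrightarrow> F2 = (if (\<forall>C\<in>Cs. Fs C \<noteq> None)
                  then Some (TE \<union> (\<Union>C\<in>Cs. the (Fs C))) else None)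
         \<Longrightarrow> cheaper (cost I) F1 F2 R
         \<Longrightarrow> dst_run I optt R (1 + k1 + (\<Sum>C\<in>Cs. ks C))"

end

theory Submission
  imports Defs
begin

text \<open>
  Calls: if \<open>|X| \<le> 2^l\<close> and \<open>optt \<le> 2^o\<close>, the call with \<open>optt/2\<close> makes at most
  \<open>|X| 2^(2l+o-1)\<close> calls (just one if \<open>o = 0\<close>, as then \<open>optt/2 < 1\<close>), and the calls on
  the components, each with at most \<open>2^(l-1)\<close> of the \<open>|X|\<close> terminals, make at most
  \<open>|X| 2^(2l+o-2)\<close> together; adding the call itself gives at most \<open>|X| 2^(2l+o)\<close>.

  Cost: compare with an arbitrary feasible F of cost \<open>c \<le> optt\<close>. If \<open>2c \<le> optt\<close>, the call
  with \<open>optt/2\<close> already meets the bound. Otherwise \<open>optt < 2c\<close>. Every vertex that survives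
  the reduction lies within distance optt of r, so the at most three shortest paths of the
  separator cost less than \<open>6c\<close>. The edges of F entering a component C form a feasible
  solution of \<open>I_C\<close>, since an r-t walk in F can be cut at its last tree vertex. These
  restrictions are pairwise disjoint, so by induction the solutions of the components cost
  at most \<open>(6(l-1)+1)c\<close> in total. Taking F optimal gives the bound \<open>(6l+1) opt\<close>.
\<close>

lemma sum_Un_le:
  fixes f :: "'a \<Rightarrow> 'b::canonically_ordered_monoid_add"
  shows "sum f (A \<union> B) \<le> sum f A + sum f B"
proof (cases "finite (A \<union> B)")
  case True
  have "sum f (A \<union> B) \<le> sum f (A \<union> B) + sum f (A \<inter> B)"
    using le_iff_add by blast
  also have "\<dots> = sum f A + sum f B" using True by (simp add: sum.union_inter)
  finally show ?thesis .
qed simp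

lemma sum_UN_le:
  fixes f :: "'a \<Rightarrow> 'b::canonically_ordered_monoid_add"
  shows "finite K \<Longrightarrow> sum f (\<Union>i\<in>K. A i) \<le> (\<Sum>i\<in>K. sum f (A i))"
proof (induction K rule: finite_induct)
  case (insert i K)
  have "sum f (\<Union>i\<in>insert i K. A i) \<le> sum f (A i) + sum f (\<Union>i\<in>K. A i)"
    using sum_Un_le by simp
  also have "\<dots> \<le> sum f (A i) + (\<Sum>i\<in>K. sum f (A i))" using insert.IH by (rule add_left_mono)
  finally show ?case using insert.hyps by simp
qed simp

section \<open>Walks, reachability and distances\<close>

definition wf_graph :: "('v, 'e) dst_inst \<Rightarrow> bool" where
  "wf_graph I \<longleftrightarrow> (\<forall>e\<in>es I. src I e \<in> vs I \<and> tgt I e \<in> vs I)"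

definition root_reaches :: "('v, 'e) dst_inst \<Rightarrow> 'e set \<Rightarrow> 'v \<Rightarrow> bool" where
  "root_reaches I F v \<longleftrightarrow> (\<exists>p. walk I (root I) p v \<and> set p \<subseteq> F)"

lemma wf_inst_wf_graph: "wf_inst I \<Longrightarrow> wf_graph I"
  by (simp add: wf_inst_def wf_graph_def)

lemma wf_inst_finite_terms: "wf_inst I \<Longrightarrow> finite (terms I)"
  unfolding wf_inst_def by (meson finite_Diff finite_subset)

lemma walk_Nil [simp]: "walk I u [] v \<longleftrightarrow> u = v \<and> u \<in> vs I"
  by (auto simp: walk_def)

lemma walk_Cons:
  assumes "wf_graph I"
  shows "walk I u (e # p) v \<longleftrightarrow> e \<in> es I \<and> src I e = u \<and> walk I (tgt I e) p v"
proof (cases p)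
  case Nil
  then show ?thesis using assms by (auto simp: walk_def wf_graph_def)
next
  case (Cons a p')
  have "(\<forall>i. Suc i < length (e # p) \<longrightarrow> tgt I ((e # p) ! i) = src I ((e # p) ! Suc i))
     \<longleftrightarrow> tgt I e = src I a \<and> (\<forall>i. Suc i < length p \<longrightarrow> tgt I (p ! i) = src I (p ! Suc i))"
    unfolding Cons by (metis Suc_less_eq length_Cons nth_Cons_0 nth_Cons_Suc zero_less_Suc
        not0_implies_Suc)
  then show ?thesis using assms Cons by (auto simp: walk_def wf_graph_def)
qed

lemma walk_append:
  assumes "wf_graph I"
  shows "walk I u (p @ q) w \<longleftrightarrow> (\<exists>v. walk I u p v \<and> walk I v q w)"
proof (induction p arbitrary: u)
  case Nil
  then show ?case by (auto simp: walk_def)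
next
  case (Cons e p)
  then show ?case by (auto simp: walk_Cons[OF assms])
qed

lemma walk_snoc:
  assumes "wf_graph I"
  shows "walk I u (p @ [e]) w \<longleftrightarrow> walk I u p (src I e) \<and> e \<in> es I \<and> tgt I e = w"
  using assms by (auto simp: walk_append walk_Cons wf_graph_def)

lemma walk_endpoints: "walk I u p v \<Longrightarrow> u \<in> vs I \<and> v \<in> vs I"
  by (simp add: walk_def)

lemma walk_edges: "walk I u p v \<Longrightarrow> set p \<subseteq> es I"
  by (simp add: walk_def)

lemma walk_cost_simps [simp]:
  "walk_cost I [] = 0"
  "walk_cost I (e # p) = cost I e + walk_cost I p"
  "walk_cost I (p @ q) = walk_cost I p + walk_cost I q"
  by (simp_all add: walk_cost_def)

lemma sum_cost_set_le_walk_cost: "sum (cost I) (set p) \<le> walk_cost I p"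
  unfolding walk_cost_def by (induction p) (auto simp: sum.insert_if)

lemma walk_remove_cycles:
  assumes "wf_graph I" "walk I u p v"
  shows "\<exists>q. walk I u q v \<and> distinct q \<and> set q \<subseteq> set p"
  using assms(2)
proof (induction "length p" arbitrary: p rule: less_induct)
  case less
  show ?case
  proof (cases "distinct p")
    case False
    then obtain xs ys zs y where p: "p = xs @ [y] @ ys @ [y] @ zs"
      using not_distinct_decomp by blast
    have "walk I u (xs @ [y] @ zs) v"
      using less.prems unfolding p walk_append[OF assms(1)] walk_Cons[OF assms(1)] by auto
    with less.hyps[of "xs @ [y] @ zs"] show ?thesis unfolding p by fastforce
  qed (use less.prems in blast)
qed

lemma root_reaches_root: "root I \<in> vs I \<Longrightarrow> root_reaches I F (root I)"
  unfolding root_reaches_def by (intro exI[of _ "[]"]) simp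

lemma root_reaches_edge:
  assumes "wf_graph I" "root_reaches I F (src I e)" "e \<in> es I" "e \<in> F"
  shows "root_reaches I F (tgt I e)"
proof -
  obtain p where "walk I (root I) p (src I e)" "set p \<subseteq> F"
    using assms(2) unfolding root_reaches_def by blast
  then show ?thesis unfolding root_reaches_def using assms
    by (intro exI[of _ "p @ [e]"]) (simp add: walk_snoc)
qed

lemma root_reaches_mono: "root_reaches I F v \<Longrightarrow> F \<subseteq> G \<Longrightarrow> root_reaches I G v"
  unfolding root_reaches_def by blast

lemma root_reaches_walk_edge:
  assumes "wf_graph I" "walk I (root I) p v" "set p \<subseteq> F" "e \<in> set p"
  shows "root_reaches I F (src I e)" "root_reaches I F (tgt I e)"
proof -
  obtain a b where p: "p = a @ e # b" using assms(4) split_list by metis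
  then have "walk I (root I) a (src I e)" "e \<in> es I" "set a \<subseteq> F" "e \<in> F"
    using assms(2,3) by (auto simp: walk_append[OF assms(1)] walk_Cons[OF assms(1)])
  then show "root_reaches I F (src I e)" "root_reaches I F (tgt I e)"
    using root_reaches_edge[OF assms(1)] unfolding root_reaches_def by blast+
qed

lemma feasible_walk:
  assumes "wf_inst I" "feasible I F" "t \<in> terms I"
  shows "\<exists>p. walk I (root I) p t \<and> set p \<subseteq> F \<and> walk_cost I p \<le> sol_cost I F"
proof -
  obtain p where p: "walk I (root I) p t" "set p \<subseteq> F"
    using assms(2,3) unfolding feasible_def by blast
  obtain q where q: "walk I (root I) q t" "distinct q" "set q \<subseteq> set p"
    using walk_remove_cycles[OF wf_inst_wf_graph[OF assms(1)] p(1)] by blast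
  have "finite F" using assms(1,2) unfolding feasible_def wf_inst_def by (meson finite_subset)
  then have "walk_cost I q \<le> sol_cost I F"
    using q(2,3) p(2) unfolding walk_cost_def sol_cost_def
    by (simp add: sum_list_distinct_conv_sum_set sum_mono2)
  with p q show ?thesis by blast
qed

lemma sol_cost_pos:
  assumes "wf_inst I" "feasible I F" "terms I \<noteq> {}"
  shows "0 < sol_cost I F"
proof -
  obtain t where t: "t \<in> terms I" using assms(3) by blast
  then obtain p where p: "walk I (root I) p t" "walk_cost I p \<le> sol_cost I F"
    using feasible_walk[OF assms(1,2)] by blast
  have "t \<noteq> root I" using assms(1) t unfolding wf_inst_def by auto
  then obtain e p' where "p = e # p'" "e \<in> es I" using p(1) by (cases p) (auto simp: walk_def)
  then show ?thesis using p(2) assms(1) unfolding wf_inst_def by fastforce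
qed

lemma dist_le_walk_cost: "walk I u p v \<Longrightarrow> dist I u v \<le> ereal (real (walk_cost I p))"
  unfolding dist_def by (rule INF_lower) simp

lemma dist_le_of_walk:
  assumes "walk I u p v" "real (walk_cost I p) \<le> x"
  shows "dist I u v \<le> ereal x"
  by (rule order_trans[OF dist_le_walk_cost[OF assms(1)]]) (simp add: assms(2))

lemma dist_attained:
  assumes "dist I u v \<noteq> \<infinity>"
  shows "\<exists>q. walk I u q v \<and> dist I u v = ereal (real (walk_cost I q))"
proof -
  obtain p where "walk I u p v"
    using assms unfolding dist_def by (fastforce simp: top_ereal_def)
  then obtain q where q: "walk I u q v" "\<forall>q'. walk I u q' v \<longrightarrow> walk_cost I q \<le> walk_cost I q'"
    using ex_has_least_nat[of "\<lambda>p. walk I u p v"] by blast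
  then have "ereal (real (walk_cost I q)) \<le> dist I u v"
    unfolding dist_def by (auto intro!: INF_greatest)
  with dist_le_walk_cost[OF q(1)] q(1) show ?thesis by auto
qed

lemma opt_le_sol_cost: "feasible I F \<Longrightarrow> opt I \<le> ereal (real (sol_cost I F))"
  unfolding opt_def by (rule INF_lower) simp

lemma opt_attained:
  assumes "opt I \<noteq> \<infinity>"
  shows "\<exists>F. feasible I F \<and> opt I = ereal (real (sol_cost I F))"
proof -
  obtain F0 where "feasible I F0"
    using assms unfolding opt_def by (metis INF_empty empty_Collect_eq top_ereal_def)
  then obtain F where F: "feasible I F" "\<forall>F'. feasible I F' \<longrightarrow> sol_cost I F \<le> sol_cost I F'"
    using ex_has_least_nat[of "feasible I"] by blast
  then have "ereal (real (sol_cost I F)) \<le> opt I"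
    unfolding opt_def by (auto intro!: INF_greatest)
  with opt_le_sol_cost[OF F(1)] F(1) show ?thesis by auto
qed

lemma reduce_simps [simp]:
  "root (reduce I optt) = root I" "terms (reduce I optt) = terms I"
  "src (reduce I optt) = src I" "tgt (reduce I optt) = tgt I" "cost (reduce I optt) = cost I"
  "vs (reduce I optt) = {v \<in> vs I. dist I (root I) v \<le> ereal optt}"
  "es (reduce I optt) = {e \<in> es I. src I e \<in> vs (reduce I optt) \<and> tgt I e \<in> vs (reduce I optt)}"
  by (simp_all add: reduce_def Let_def)

lemma walk_cost_reduce [simp]: "walk_cost (reduce I optt) p = walk_cost I p"
  by (simp add: walk_cost_def)

lemma wf_graph_reduce: "wf_graph (reduce I optt)"
  unfolding wf_graph_def by simp

lemma walk_of_walk_reduce: "walk (reduce I optt) u p v \<Longrightarrow> walk I u p v"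
  unfolding walk_def by auto

lemma feasible_of_feasible_reduce:
  assumes "feasible (reduce I optt) F"
  shows "feasible I F"
  unfolding feasible_def
proof (intro conjI ballI)
  show "F \<subseteq> es I" using assms unfolding feasible_def by auto
  fix t assume "t \<in> terms I"
  then obtain p where "walk (reduce I optt) (root I) p t" "set p \<subseteq> F"
    using assms unfolding feasible_def by auto
  then show "\<exists>p. walk I (root I) p t \<and> set p \<subseteq> F" by (blast dest: walk_of_walk_reduce)
qed

lemma walk_reduce:
  assumes "wf_graph I" "walk I (root I) p v" "real (walk_cost I p) \<le> optt"
  shows "walk (reduce I optt) (root I) p v"
  using assms(2,3)
proof (induction p arbitrary: v rule: rev_induct)
  case Nil
  then show ?case using dist_le_of_walk[OF Nil(1)] by auto
next
  case (snoc e p)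
  then have e: "walk I (root I) p (src I e)" "e \<in> es I" "tgt I e = v"
    by (simp_all add: walk_snoc[OF assms(1)])
  have p: "walk (reduce I optt) (root I) p (src I e)"
    using snoc.IH[OF e(1)] snoc.prems(2) by simp
  have "tgt I e \<in> vs (reduce I optt)"
    using dist_le_of_walk[OF snoc.prems(1,2)] e assms(1) unfolding wf_graph_def by auto
  moreover have "src I e \<in> vs (reduce I optt)" using walk_endpoints[OF p] by blast
  ultimately show ?case using p e by (simp add: walk_snoc[OF wf_graph_reduce])
qed

lemma wf_inst_reduce:
  assumes "wf_inst I" "0 \<le> optt" "\<forall>t\<in>terms I. dist I (root I) t \<le> ereal optt"
  shows "wf_inst (reduce I optt)"
proof -
  have "dist I (root I) (root I) \<le> ereal optt"
    using dist_le_of_walk[of I "root I" "[]"] assms(1,2) by (simp add: wf_inst_def)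
  then show ?thesis using assms unfolding wf_inst_def by auto
qed

lemma feasible_reduce:
  assumes "wf_inst I" "feasible I F" "real (sol_cost I F) \<le> optt"
  shows "feasible (reduce I optt) (F \<inter> es (reduce I optt))"
  unfolding feasible_def
proof (intro conjI ballI)
  fix t assume "t \<in> terms (reduce I optt)"
  then obtain p where p: "walk I (root I) p t" "set p \<subseteq> F" "walk_cost I p \<le> sol_cost I F"
    using feasible_walk[OF assms(1,2)] by auto
  then have "walk (reduce I optt) (root I) p t"
    using walk_reduce[OF wf_inst_wf_graph[OF assms(1)]] assms(3) by (meson of_nat_le_iff order_trans)
  then show "\<exists>p. walk (reduce I optt) (root (reduce I optt)) p t \<and> set p \<subseteq> F \<inter> es (reduce I optt)"
    using p(2) walk_edges by fastforce
qed simp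

lemma shortest_walk_reduce_cost:
  assumes "wf_graph I" "shortest_walk (reduce I optt) (root I) p v"
  shows "real (walk_cost I p) \<le> optt"
proof -
  have "walk (reduce I optt) (root I) p v"
    using assms(2) unfolding shortest_walk_def by blast
  then have "v \<in> vs (reduce I optt)" by (rule walk_endpoints[THEN conjunct2])
  then have d: "dist I (root I) v \<le> ereal optt" by simp
  then obtain q where q: "walk I (root I) q v" "dist I (root I) v = ereal (real (walk_cost I q))"
    using dist_attained[of I "root I" v] by force
  then have "real (walk_cost I q) \<le> optt" using d by simp
  moreover have "walk (reduce I optt) (root I) q v"
    using walk_reduce[OF assms(1) q(1)] calculation .
  ultimately have "walk_cost I p \<le> walk_cost I q"
    using assms(2) unfolding shortest_walk_def by simp
  with \<open>real (walk_cost I q) \<le> optt\<close> show ?thesis by linarith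
qed

section \<open>Weakly connected components\<close>

definition wcomp_rel :: "('v, 'e) dst_inst \<Rightarrow> 'v set \<Rightarrow> ('v \<times> 'v) set" where
  "wcomp_rel I W = (let V' = vs I - W;
                     E' = {e \<in> es I. src I e \<in> V' \<and> tgt I e \<in> V'};
                     R = {(src I e, tgt I e) | e. e \<in> E'}
                 in ((R \<union> R\<inverse>)\<^sup>*) \<inter> (V' \<times> V'))"

lemma wcomps_eq_quotient: "wcomps I W = (vs I - W) // wcomp_rel I W"
  by (simp add: wcomps_def wcomp_rel_def Let_def)

lemma wcomp_rel_subset: "wcomp_rel I W \<subseteq> (vs I - W) \<times> (vs I - W)"
  by (auto simp: wcomp_rel_def Let_def)

lemma sym_on_wcomp_rel: "sym_on (vs I - W) (wcomp_rel I W)"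
proof -
  define R where "R = {(src I e, tgt I e) | e. e \<in> {e \<in> es I. src I e \<in> vs I - W \<and> tgt I e \<in> vs I - W}}"
  have "sym ((R \<union> R\<inverse>)\<^sup>*)" by (rule sym_rtrancl) (auto simp: sym_def)
  then show ?thesis unfolding wcomp_rel_def Let_def R_def[symmetric] sym_on_def sym_def by blast
qed

lemma trans_on_wcomp_rel: "trans_on (vs I - W) (wcomp_rel I W)"
  unfolding wcomp_rel_def Let_def trans_on_def by (auto intro: rtrancl_trans)

lemma wcomps_disjoint: "C \<in> wcomps I W \<Longrightarrow> D \<in> wcomps I W \<Longrightarrow> C \<noteq> D \<Longrightarrow> C \<inter> D = {}"
  unfolding wcomps_eq_quotient
  using quotient_disj_strong[OF wcomp_rel_subset sym_on_wcomp_rel trans_on_wcomp_rel] by blast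

lemma wcomps_subset: "C \<in> wcomps I W \<Longrightarrow> C \<subseteq> vs I - W"
  unfolding wcomps_eq_quotient quotient_def using wcomp_rel_subset by blast

lemma finite_wcomps: "finite (vs I) \<Longrightarrow> finite (wcomps I W)"
  unfolding wcomps_eq_quotient by (rule finite_quotient[OF _ wcomp_rel_subset]) simp

lemma wcomps_cover: "v \<in> vs I - W \<Longrightarrow> \<exists>C\<in>wcomps I W. v \<in> C"
  unfolding wcomps_eq_quotient quotient_def by (auto simp: wcomp_rel_def Let_def)

lemma wcomps_src_mem:
  assumes "C \<in> wcomps I W" "e \<in> es I" "tgt I e \<in> C" "src I e \<in> vs I - W"
  shows "src I e \<in> C"
proof -
  define V' where "V' = vs I - W"
  define R where "R = {(src I e, tgt I e) | e. e \<in> {e \<in> es I. src I e \<in> V' \<and> tgt I e \<in> V'}}"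
  have rel: "wcomp_rel I W = (R \<union> R\<inverse>)\<^sup>* \<inter> (V' \<times> V')"
    unfolding wcomp_rel_def Let_def R_def V'_def by simp
  obtain x where x: "x \<in> V'" "C = wcomp_rel I W `` {x}"
    using assms(1) unfolding wcomps_eq_quotient quotient_def V'_def by blast
  have "tgt I e \<in> V'" using assms(1,3) wcomps_subset V'_def by blast
  then have "(tgt I e, src I e) \<in> R \<union> R\<inverse>" using assms(2,4) unfolding R_def V'_def by blast
  with assms(3) x rel have "(x, src I e) \<in> (R \<union> R\<inverse>)\<^sup>*" by (auto intro: rtrancl_into_rtrancl)
  then show ?thesis using x assms(4) rel V'_def by auto
qed

lemma sum_card_wcomps_terms_le:
  assumes "wf_inst I" "Cs \<subseteq> wcomps I W"
  shows "(\<Sum>C\<in>Cs. card (C \<inter> terms I)) \<le> card (terms I)"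
proof -
  have "finite Cs"
    using assms finite_wcomps finite_subset unfolding wf_inst_def by blast
  then have "(\<Sum>C\<in>Cs. card (C \<inter> terms I)) = card (\<Union>C\<in>Cs. C \<inter> terms I)"
    using wcomps_disjoint[of _ I W] assms wf_inst_finite_terms[OF assms(1)]
    by (intro card_UN_disjoint[symmetric]) auto
  also have "\<dots> \<le> card (terms I)"
    using wf_inst_finite_terms[OF assms(1)] by (intro card_mono) auto
  finally show ?thesis .
qed

lemma sum_restrictions_le:
  fixes f :: "'e \<Rightarrow> 'a::canonically_ordered_monoid_add"
  assumes "wf_inst I" "Cs \<subseteq> wcomps I W" "finite F"
  shows "(\<Sum>C\<in>Cs. sum f {e \<in> F \<inter> X C. tgt I e \<in> C}) \<le> sum f F"
proof -
  have "finite Cs"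
    using assms(1,2) finite_wcomps finite_subset unfolding wf_inst_def by blast
  then have "(\<Sum>C\<in>Cs. sum f {e \<in> F \<inter> X C. tgt I e \<in> C}) = sum f (\<Union>C\<in>Cs. {e \<in> F \<inter> X C. tgt I e \<in> C})"
    using assms(2,3) wcomps_disjoint[of _ I W] by (intro sum.UNION_disjoint[symmetric]) auto
  also have "\<dots> \<le> sum f F" using assms(3) by (intro sum_mono2) auto
  finally show ?thesis .
qed

section \<open>Induced subinstances\<close>

lemma root_in_tree_verts [simp]: "root I \<in> tree_verts I TE"
  by (simp add: tree_verts_def)

lemma sub_inst_simps [simp]:
  "vs (sub_inst I TE C) = C \<union> {root I}"
  "root (sub_inst I TE C) = root I"
  "terms (sub_inst I TE C) = C \<inter> terms I"
  "cost (sub_inst I TE C) = cost I"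
  "src (sub_inst I TE C) e = (if src I e \<in> tree_verts I TE then root I else src I e)"
  "tgt (sub_inst I TE C) e = (if tgt I e \<in> tree_verts I TE then root I else tgt I e)"
  "es (sub_inst I TE C) = {e \<in> es I - TE. src (sub_inst I TE C) e \<in> C \<union> {root I}
                                         \<and> tgt (sub_inst I TE C) e \<in> C \<union> {root I}}"
  by (simp_all add: sub_inst_def Let_def)

lemma wf_graph_sub_inst: "wf_graph (sub_inst I TE C)"
  unfolding wf_graph_def by (simp only: sub_inst_simps) blast

lemma wf_inst_sub_inst:
  assumes "wf_inst I" "C \<in> wcomps I (tree_verts I TE)"
  shows "wf_inst (sub_inst I TE C)"
proof -
  have C: "C \<subseteq> vs I - tree_verts I TE" using wcomps_subset[OF assms(2)] .
  then have "root I \<notin> C" by auto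
  moreover have "finite C" using C assms(1) unfolding wf_inst_def by (meson finite_Diff finite_subset)
  ultimately show ?thesis using assms(1) unfolding wf_inst_def by auto
qed

lemma feasible_iff_root_reaches: "feasible I F \<longleftrightarrow> F \<subseteq> es I \<and> (\<forall>t\<in>terms I. root_reaches I F t)"
  by (simp add: feasible_def root_reaches_def)

text \<open>Walking back from a vertex of C, the walk stays in C until it first meets the tree.\<close>

lemma walk_sub_inst_of_walk:
  assumes "wf_graph I" "C \<in> wcomps I (tree_verts I TE)"
    and "walk I (root I) p v" "v \<in> C" "set p \<subseteq> F"
  shows "\<exists>q. walk (sub_inst I TE C) (root I) q v
             \<and> set q \<subseteq> {e \<in> F \<inter> es (sub_inst I TE C). tgt I e \<in> C}"
  using assms(3-5)
proof (induction p arbitrary: v rule: rev_induct)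
  case Nil
  then show ?case using wcomps_subset[OF assms(2)] by auto
next
  case (snoc e p)
  let ?S = "sub_inst I TE C" and ?W = "tree_verts I TE"
  from snoc.prems have e: "walk I (root I) p (src I e)" "e \<in> es I" "tgt I e = v" "e \<in> F"
    by (simp_all add: walk_snoc[OF assms(1)])
  have "v \<notin> ?W" using snoc.prems(2) wcomps_subset[OF assms(2)] by blast
  then have tgt: "e \<notin> TE" "tgt ?S e = v" using e(3) by (auto simp: tree_verts_def)
  show ?case
  proof (cases "src I e \<in> ?W")
    case True
    then have "walk ?S (root I) [e] v" "e \<in> F \<inter> es ?S"
      using e tgt snoc.prems(2) by (auto simp: walk_Cons[OF wf_graph_sub_inst] simp del: sub_inst_simps(6))
    then show ?thesis using e(3) snoc.prems(2) by (intro exI[of _ "[e]"]) auto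
  next
    case False
    then have "src I e \<in> C"
      using wcomps_src_mem[OF assms(2) e(2)] e(2,3) snoc.prems(2) assms(1) unfolding wf_graph_def by blast
    then obtain q where q: "walk ?S (root I) q (src I e)"
      "set q \<subseteq> {e \<in> F \<inter> es ?S. tgt I e \<in> C}"
      using snoc.IH[OF e(1)] snoc.prems(3) by auto
    have "walk ?S (root I) (q @ [e]) v" "e \<in> es ?S"
      using q(1) tgt False \<open>src I e \<in> C\<close> e(2) snoc.prems(2)
      by (auto simp: walk_snoc[OF wf_graph_sub_inst] simp del: sub_inst_simps(6))
    then show ?thesis using q(2) e(3,4) snoc.prems(2) by (intro exI[of _ "q @ [e]"]) auto
  qed
qed

lemma root_reaches_of_walk_sub_inst:
  assumes "wf_graph I" "root I \<in> vs I" "\<forall>w\<in>tree_verts I TE. root_reaches I F w"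
    and "walk (sub_inst I TE C) (root I) q v" "set q \<subseteq> F"
  shows "root_reaches I F v"
  using assms(4,5)
proof (induction q arbitrary: v rule: rev_induct)
  case Nil
  then show ?case using root_reaches_root[OF assms(2)] by simp
next
  case (snoc e q)
  let ?S = "sub_inst I TE C" and ?W = "tree_verts I TE"
  from snoc.prems have e: "walk ?S (root I) q (src ?S e)" "e \<in> es I" "tgt ?S e = v" "e \<in> F"
    by (auto simp: walk_snoc[OF wf_graph_sub_inst] simp del: sub_inst_simps(5,6))
  have "root_reaches I F (src I e)"
  proof (cases "src I e \<in> ?W")
    case False
    then show ?thesis using snoc.IH[OF e(1)] snoc.prems(2) by simp
  qed (use assms(3) in blast)
  show ?case
  proof (cases "tgt I e \<in> ?W")
    case True
    then show ?thesis using e(3) root_reaches_root[OF assms(2)] by simp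
  next
    case False
    then show ?thesis
      using e(2-4) root_reaches_edge[OF assms(1) \<open>root_reaches I F (src I e)\<close>] by simp
  qed
qed

lemma feasible_sub_inst_restrict:
  assumes "wf_graph I" "C \<in> wcomps I (tree_verts I TE)" "feasible I F"
  shows "feasible (sub_inst I TE C) {e \<in> F \<inter> es (sub_inst I TE C). tgt I e \<in> C}"
  unfolding feasible_def
proof (intro conjI ballI)
  fix t assume "t \<in> terms (sub_inst I TE C)"
  then obtain p where "walk I (root I) p t" "set p \<subseteq> F" "t \<in> C"
    using assms(3) unfolding feasible_def by auto
  then show "\<exists>q. walk (sub_inst I TE C) (root (sub_inst I TE C)) q t
              \<and> set q \<subseteq> {e \<in> F \<inter> es (sub_inst I TE C). tgt I e \<in> C}"
    using walk_sub_inst_of_walk[OF assms(1,2)] by simp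
qed blast

section \<open>Separators\<close>

lemma valid_separator_subset: "valid_separator I TE \<Longrightarrow> TE \<subseteq> es I"
  unfolding valid_separator_def shortest_walk_def by (auto dest!: walk_edges)

lemma root_reaches_tree_verts:
  assumes "wf_graph I" "root I \<in> vs I" "valid_separator I TE" "v \<in> tree_verts I TE"
  shows "root_reaches I TE v"
proof -
  obtain ps where ps: "\<forall>p\<in>set ps. \<exists>w. shortest_walk I (root I) p w" "TE = (\<Union>p\<in>set ps. set p)"
    using assms(3) unfolding valid_separator_def by blast
  have ends: "root_reaches I TE (src I e) \<and> root_reaches I TE (tgt I e)" if e: "e \<in> TE" for e
  proof -
    obtain p w where p: "p \<in> set ps" "e \<in> set p" "walk I (root I) p w"
      using e ps unfolding shortest_walk_def by blast
    moreover have "set p \<subseteq> TE" using ps(2) p(1) by blast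
    ultimately show ?thesis using root_reaches_walk_edge[OF assms(1)] by blast
  qed
  from assms(4) consider "v = root I" | e where "e \<in> TE" "v = src I e \<or> v = tgt I e"
    unfolding tree_verts_def by blast
  then show ?thesis using ends root_reaches_root[OF assms(2)] by cases auto
qed

lemma feasible_combine:
  assumes "wf_inst I" "valid_separator I TE"
    and "Cs = {C \<in> wcomps I (tree_verts I TE). C \<inter> terms I \<noteq> {}}"
    and "\<forall>C\<in>Cs. feasible (sub_inst I TE C) (B C)"
  shows "feasible I (TE \<union> (\<Union>C\<in>Cs. B C))"
  unfolding feasible_iff_root_reaches
proof (intro conjI ballI)
  let ?G = "TE \<union> (\<Union>C\<in>Cs. B C)" and ?W = "tree_verts I TE"
  have g: "wf_graph I" and r: "root I \<in> vs I"
    using assms(1) wf_inst_wf_graph unfolding wf_inst_def by auto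
  have W: "\<forall>w\<in>?W. root_reaches I ?G w"
    using root_reaches_tree_verts[OF g r assms(2)] root_reaches_mono[of I TE _ ?G] by blast
  have "B C \<subseteq> es I" if "C \<in> Cs" for C
    using assms(4) that unfolding feasible_def by auto
  then show "?G \<subseteq> es I" using valid_separator_subset[OF assms(2)] by blast
  fix t assume t: "t \<in> terms I"
  show "root_reaches I ?G t"
  proof (cases "t \<in> ?W")
    case False
    moreover have "t \<in> vs I" using assms(1) t unfolding wf_inst_def by auto
    ultimately obtain C where C: "C \<in> wcomps I ?W" "t \<in> C"
      using wcomps_cover[of t I ?W] by blast
    then have "C \<in> Cs" using assms(3) t by blast
    then have "root_reaches (sub_inst I TE C) (B C) t"
      using assms(4) C(2) t unfolding feasible_iff_root_reaches by simp
    then obtain q where "walk (sub_inst I TE C) (root I) q t" "set q \<subseteq> ?G"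
      using \<open>C \<in> Cs\<close> unfolding root_reaches_def by auto
    then show ?thesis using root_reaches_of_walk_sub_inst[OF g r W] by blast
  qed (use W in blast)
qed

lemma separator_cost:
  assumes "wf_graph I" "valid_separator (reduce I optt) TE" "0 \<le> optt"
  shows "real (sum (cost I) TE) \<le> 3 * optt"
proof -
  obtain ps where ps: "length ps \<le> 3" "\<forall>p\<in>set ps. \<exists>v. shortest_walk (reduce I optt) (root I) p v"
      "TE = (\<Union>p\<in>set ps. set p)"
    using assms(2) unfolding valid_separator_def by auto
  have "sum (cost I) TE \<le> (\<Sum>p\<in>set ps. sum (cost I) (set p))"
    unfolding ps(3) by (rule sum_UN_le) simp
  also have "\<dots> \<le> (\<Sum>p\<in>set ps. walk_cost I p)"
    by (intro sum_mono sum_cost_set_le_walk_cost)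
  finally have "real (sum (cost I) TE) \<le> (\<Sum>p\<in>set ps. real (walk_cost I p))"
    by (metis of_nat_le_iff of_nat_sum)
  also have "\<dots> \<le> real (card (set ps)) * optt"
    using ps(2) shortest_walk_reduce_cost[OF assms(1)] by (intro sum_bounded_above) blast
  also have "\<dots> \<le> 3 * optt"
    using ps(1) card_length[of ps] assms(3) by (intro mult_right_mono) auto
  finally show ?thesis .
qed

lemma separator_component_terms:
  assumes "valid_separator I TE" "C \<in> wcomps I (tree_verts I TE)" "card (terms I) \<le> 2 ^ Suc m"
  shows "card (C \<inter> terms I) \<le> 2 ^ m"
  using assms unfolding valid_separator_def by auto

section \<open>Executions of DST\<close>

lemma cheaper_cases: "cheaper c F1 F2 R \<Longrightarrow> R = F1 \<or> R = F2"
  unfolding cheaper_def by auto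

lemma cheaper_le:
  assumes "cheaper c F1 F2 R" "F1 = Some B \<or> F2 = Some B"
  shows "\<exists>A. R = Some A \<and> sum c A \<le> sum c B"
  using assms unfolding cheaper_def by auto

lemma dst_run_below_one: "dst_run I optt R k \<Longrightarrow> optt < 1 \<Longrightarrow> k = 1 \<and> R = None"
  by (induction rule: dst_run.induct) auto

lemma wf_inst_reduce_of_run_guard:
  assumes "wf_inst I" "\<not> (optt < 1 \<or> (\<exists>t\<in>terms I. ereal optt < dist I (root I) t))"
  shows "wf_inst (reduce I optt)"
  using assms by (intro wf_inst_reduce) (auto simp: not_less)

lemma dst_run_calls:
  assumes "dst_run I optt R k" "wf_inst I" "terms I \<noteq> {}" "card (terms I) \<le> 2 ^ l" "optt \<le> 2 ^ ob"
  shows "k \<le> card (terms I) * 2 ^ (2 * l + ob)"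
  using assms
proof (induction arbitrary: l ob rule: dst_run.induct)
  case (fail optt I)
  then have "0 < card (terms I)" using wf_inst_finite_terms card_gt_0_iff by blast
  then show ?case by (simp add: Suc_le_eq)
next
  case (recur optt I F1 k1 I' TE Cs Fs ks F2 R)
  let ?x = "card (terms I)"
  have "?x \<noteq> 0" using recur.prems(1,2) wf_inst_finite_terms[of I] by simp
  with recur.hyps(2) have "2 \<le> ?x" by linarith
  then obtain m where l: "l = Suc m" using recur.prems(3) by (cases l) auto
  define N where "N = (2::nat) ^ (2 * m + ob)"
  have wf': "wf_inst I'" using wf_inst_reduce_of_run_guard recur.hyps(1,4) recur.prems(1) by blast
  have xN: "1 \<le> ?x * N" using \<open>2 \<le> ?x\<close> by (simp add: N_def Suc_le_eq)
  have k1: "k1 \<le> 2 * (?x * N)"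
  proof (cases ob)
    case 0
    then have "k1 = 1" using dst_run_below_one[OF recur.hyps(3)] recur.prems(4) by simp
    then show ?thesis using xN by simp
  next
    case (Suc n)
    then have "k1 \<le> ?x * 2 ^ (2 * l + n)" using recur.IH(1)[OF recur.prems(1-3)] recur.prems(4) by simp
    then show ?thesis by (simp add: N_def l Suc power_add)
  qed
  have "ks C \<le> card (C \<inter> terms I) * N" if C: "C \<in> Cs" for C
  proof -
    have Cw: "C \<in> wcomps I' (tree_verts I' TE)" and "C \<inter> terms I \<noteq> {}"
      using C recur.hyps(4,6) by auto
    moreover have "card (C \<inter> terms I) \<le> 2 ^ m"
      using separator_component_terms[OF recur.hyps(5) Cw] recur.hyps(4) recur.prems(3) l by simp
    ultimately show ?thesis
      using recur.IH(2) C wf_inst_sub_inst[OF wf' Cw] recur.hyps(4) recur.prems(4) unfolding N_def by simp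
  qed
  then have "(\<Sum>C\<in>Cs. ks C) \<le> (\<Sum>C\<in>Cs. card (C \<inter> terms I)) * N"
    by (simp add: sum_distrib_right sum_mono)
  also have "\<dots> \<le> ?x * N"
    using sum_card_wcomps_terms_le[OF wf', of Cs "tree_verts I' TE"] recur.hyps(4,6) by simp
  finally have "1 + k1 + (\<Sum>C\<in>Cs. ks C) \<le> 4 * (?x * N)" using k1 xN by linarith
  also have "\<dots> = ?x * 2 ^ (2 * l + ob)" by (simp add: N_def l power_add)
  finally show ?case .
qed simp

lemma dst_run_feasible:
  assumes "dst_run I optt R k" "wf_inst I" "R = Some F"
  shows "feasible I F"
  using assms
proof (induction arbitrary: F rule: dst_run.induct)
  case (single optt I t p)
  then show ?case unfolding feasible_def shortest_walk_def by (auto dest: walk_edges)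
next
  case (recur optt I F1 k1 I' TE Cs Fs ks F2 R)
  have wf': "wf_inst I'" using wf_inst_reduce_of_run_guard recur.hyps(1,4) recur.prems(1) by blast
  have "feasible I G" if G: "F2 = Some G" for G
  proof -
    have "\<forall>C\<in>Cs. Fs C \<noteq> None" and G_def: "G = TE \<union> (\<Union>C\<in>Cs. the (Fs C))"
      using G recur.hyps(7) by (auto split: if_splits)
    then have "\<forall>C\<in>Cs. feasible (sub_inst I' TE C) (the (Fs C))"
      using recur.IH(2) wf_inst_sub_inst[OF wf'] recur.hyps(6) by fastforce
    then have "feasible I' G"
      unfolding G_def by (rule feasible_combine[OF wf' recur.hyps(5,6)])
    then show ?thesis using feasible_of_feasible_reduce recur.hyps(4) by blast
  qed
  then show ?case using cheaper_cases[OF recur.hyps(8)] recur.IH(1) recur.prems by auto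
qed simp

lemma combined_solution_cost:
  assumes "wf_graph I" "wf_inst (reduce I optt)" "valid_separator (reduce I optt) TE" "0 \<le> optt"
    and "Cs \<subseteq> wcomps (reduce I optt) (tree_verts (reduce I optt) TE)" "finite F"
    and "\<forall>C\<in>Cs. sum (cost I) (B C)
                 \<le> a * sum (cost I) {e \<in> F \<inter> es (sub_inst (reduce I optt) TE C). tgt I e \<in> C}"
  shows "real (sum (cost I) (TE \<union> (\<Union>C\<in>Cs. B C))) \<le> 3 * optt + real (a * sum (cost I) F)"
proof -
  let ?I' = "reduce I optt"
  have "finite Cs"
    using assms(2,5) finite_wcomps[of ?I'] finite_subset unfolding wf_inst_def by blast
  have "sum (cost I) (TE \<union> (\<Union>C\<in>Cs. B C)) \<le> sum (cost I) TE + (\<Sum>C\<in>Cs. sum (cost I) (B C))"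
    using sum_Un_le[of "cost I" TE] sum_UN_le[OF \<open>finite Cs\<close>, of "cost I" B]
    by (meson add_left_mono order_trans)
  also have "(\<Sum>C\<in>Cs. sum (cost I) (B C))
      \<le> a * (\<Sum>C\<in>Cs. sum (cost I) {e \<in> F \<inter> es (sub_inst ?I' TE C). tgt I e \<in> C})"
    using assms(7) by (simp add: sum_distrib_left sum_mono)
  also have "(\<Sum>C\<in>Cs. sum (cost I) {e \<in> F \<inter> es (sub_inst ?I' TE C). tgt I e \<in> C}) \<le> sum (cost I) F"
    using sum_restrictions_le[OF assms(2,5,6), of "cost I" "\<lambda>C. es (sub_inst ?I' TE C)"]
    unfolding reduce_simps(4) .
  finally have "sum (cost I) (TE \<union> (\<Union>C\<in>Cs. B C)) \<le> sum (cost I) TE + a * sum (cost I) F"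
    by (simp add: mult_le_mono2)
  then show ?thesis using separator_cost[OF assms(1,3,4)] by linarith
qed

lemma dst_run_cost:
  assumes "dst_run I optt R k" "wf_inst I" "terms I \<noteq> {}" "card (terms I) \<le> 2 ^ l"
    and "feasible I F" "real (sol_cost I F) \<le> optt"
  shows "\<exists>A. R = Some A \<and> sol_cost I A \<le> (6 * l + 1) * sol_cost I F"
  using assms
proof (induction arbitrary: l F rule: dst_run.induct)
  case (fail optt I)
  have "1 \<le> optt" using sol_cost_pos[OF fail.prems(1,4,2)] fail.prems(5) by linarith
  moreover have "dist I (root I) t \<le> ereal optt" if "t \<in> terms I" for t
    using feasible_walk[OF fail.prems(1,4) that] fail.prems(5) dist_le_of_walk
    by (meson of_nat_le_iff order_trans)
  ultimately show ?case using fail.hyps by (meson not_le)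
next
  case (single optt I t p)
  obtain q where q: "walk I (root I) q t" "walk_cost I q \<le> sol_cost I F"
    using feasible_walk[OF single.prems(1,4)] single.hyps(2) by blast
  have "sol_cost I (set p) \<le> walk_cost I p"
    unfolding sol_cost_def by (rule sum_cost_set_le_walk_cost)
  also have "\<dots> \<le> walk_cost I q" using single.hyps(3) q(1) unfolding shortest_walk_def by blast
  also have "\<dots> \<le> (6 * l + 1) * sol_cost I F" using q(2) by simp
  finally show ?case by simp
next
  case (recur optt I F1 k1 I' TE Cs Fs ks F2 R)
  show ?case
  proof (cases "2 * real (sol_cost I F) \<le> optt")
    case True
    then obtain B where B: "F1 = Some B" "sol_cost I B \<le> (6 * l + 1) * sol_cost I F"
      using recur.IH(1)[OF recur.prems(1-4)] by auto
    then obtain A where "R = Some A" "sum (cost I) A \<le> sum (cost I) B"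
      using cheaper_le[OF recur.hyps(8)] by blast
    then show ?thesis using B(2) unfolding sol_cost_def by (blast intro: le_trans)
  next
    case False
    have "card (terms I) \<noteq> 0" using recur.prems(1,2) wf_inst_finite_terms[of I] by simp
    then obtain m where l: "l = Suc m" using recur.hyps(2) recur.prems(3) by (cases l) auto
    have wf': "wf_inst I'" using wf_inst_reduce_of_run_guard recur.hyps(1,4) recur.prems(1) by blast
    define F' where "F' = F \<inter> es I'"
    have "finite F"
      using recur.prems(1,4) unfolding feasible_def wf_inst_def by (meson finite_subset)
    then have F': "feasible I' F'" "finite F'" "sum (cost I) F' \<le> sol_cost I F"
      using feasible_reduce[OF recur.prems(1,4,5)] recur.hyps(4) unfolding F'_def sol_cost_def
      by (auto intro: sum_mono2)
    define FC where "FC C = {e \<in> F' \<inter> es (sub_inst I' TE C). tgt I e \<in> C}" for C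
    have "\<exists>B. Fs C = Some B \<and> sum (cost I) B \<le> (6 * m + 1) * sum (cost I) (FC C)"
      if C: "C \<in> Cs" for C
    proof -
      have Cw: "C \<in> wcomps I' (tree_verts I' TE)" "C \<inter> terms I \<noteq> {}" using C recur.hyps(4,6) by auto
      have "feasible (sub_inst I' TE C) (FC C)"
        unfolding FC_def using feasible_sub_inst_restrict[OF wf_inst_wf_graph[OF wf'] Cw(1) F'(1)]
          recur.hyps(4) by simp
      moreover have "sum (cost I) (FC C) \<le> sol_cost I F"
        using sum_mono2[OF F'(2), of "FC C" "cost I"] F'(3) unfolding FC_def by auto
      then have "real (sum (cost I) (FC C)) \<le> optt" using recur.prems(5) by linarith
      moreover have "card (C \<inter> terms I) \<le> 2 ^ m"
        using separator_component_terms[OF recur.hyps(5) Cw(1)] recur.hyps(4) recur.prems(3) l by simp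
      ultimately show ?thesis
        using conjunct2[OF bspec[OF recur.IH(2) C], rule_format, of m "FC C"]
          wf_inst_sub_inst[OF wf' Cw(1)] Cw(2) recur.hyps(4)
        by (simp add: sol_cost_def)
    qed
    then obtain B where B: "\<forall>C\<in>Cs. Fs C = Some (B C)
                                 \<and> sum (cost I) (B C) \<le> (6 * m + 1) * sum (cost I) (FC C)"
      by metis
    then have F2: "F2 = Some (TE \<union> (\<Union>C\<in>Cs. B C))" using recur.hyps(7) by simp
    have "Cs \<subseteq> wcomps I' (tree_verts I' TE)" "0 \<le> optt" using recur.hyps(1,6) by auto
    then have "real (sum (cost I) (TE \<union> (\<Union>C\<in>Cs. B C)))
        \<le> 3 * optt + real ((6 * m + 1) * sum (cost I) F')"
      using combined_solution_cost[OF wf_inst_wf_graph[OF recur.prems(1)] _ _ _ _ F'(2)]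
        wf' recur.hyps(4,5) B unfolding FC_def by blast
    also have "\<dots> \<le> real ((6 * l + 1) * sol_cost I F)"
    proof -
      have "(6 * m + 1) * sum (cost I) F' \<le> (6 * m + 1) * sol_cost I F"
        using F'(3) by (rule mult_le_mono2)
      moreover have "real ((6 * l + 1) * sol_cost I F)
          = 6 * real (sol_cost I F) + real ((6 * m + 1) * sol_cost I F)"
        by (simp add: l algebra_simps)
      ultimately show ?thesis using False by linarith
    qed
    finally have "sum (cost I) (TE \<union> (\<Union>C\<in>Cs. B C)) \<le> (6 * l + 1) * sol_cost I F"
      by (simp only: of_nat_le_iff)
    moreover obtain A where "R = Some A" "sum (cost I) A \<le> sum (cost I) (TE \<union> (\<Union>C\<in>Cs. B C))"
      using cheaper_le[OF recur.hyps(8)] F2 by blast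
    ultimately show ?thesis unfolding sol_cost_def by (blast intro: le_trans)
  qed
qed

theorem lemma3:
  fixes I :: "('v, 'e) dst_inst" and optt :: real and lvl obits :: nat
    and R :: "'e set option" and k :: nat
  assumes "wf_inst I" and "planar_inst I" and "terms I \<noteq> {}"
    and "card (terms I) \<le> 2 ^ lvl" and "optt \<le> 2 ^ obits"
    and "dst_run I optt R k"
  shows "(opt I \<le> ereal optt \<longrightarrow>
            (\<exists>F. R = Some F \<and> feasible I F
                 \<and> ereal (real (sol_cost I F)) \<le> ereal (real (6 * lvl + 1)) * opt I))
         \<and> k \<le> card (terms I) * 2 ^ (2 * lvl + obits)"
proof (intro conjI impI)
  \<comment> \<open>Planarity only guarantees the existence of the separator, which dst_run presupposes.\<close>
  show "k \<le> card (terms I) * 2 ^ (2 * lvl + obits)"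
    using dst_run_calls[OF assms(6,1,3,4,5)] .
next
  assume opt: "opt I \<le> ereal optt"
  then obtain F\<^sub>o where F\<^sub>o: "feasible I F\<^sub>o" "opt I = ereal (real (sol_cost I F\<^sub>o))"
    using opt_attained by force
  then obtain F where "R = Some F" "sol_cost I F \<le> (6 * lvl + 1) * sol_cost I F\<^sub>o"
    using dst_run_cost[OF assms(6,1,3,4) F\<^sub>o(1)] opt by auto
  moreover have "feasible I F" using dst_run_feasible[OF assms(6,1)] calculation(1) .
  moreover have "ereal (real (sol_cost I F)) \<le> ereal (real (6 * lvl + 1)) * opt I"
    using calculation(2) unfolding F\<^sub>o(2) times_ereal.simps(1) ereal_less_eq(3) of_nat_mult[symmetric]
    by (simp only: of_nat_le_iff)
  ultimately show "\<exists>F. R = Some F \<and> feasible I F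
                 \<and> ereal (real (sol_cost I F)) \<le> ereal (real (6 * lvl + 1)) * opt I"
    by blast
qed

end
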